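(* Let $n\geq2$ and define $\tilde f:[2,\infty)\to\mathbb{R}$ by \[ \tilde f(x)=\frac{n+1-2x-x(x+n-2)+\frac1n(x^2-x)}{n-1-x(x+n-2)}. \] If $\bar x\geq2$ satisfies $\tilde f'(\bar x)=0$, then $\tilde f''(\bar x)<0$; i.e. every critical point of $\tilde f$ in $[2,\infty)$ is a strict local maximum. *)

theory Defs
  imports "HOL-Analysis.Analysis"
begin

text \<open>The defining formula is used on all of the reals; its denominator is nonzero on [2,oo),
  so on a neighbourhood of [2,oo) it is smooth and derivatives there agree with
  (one-sided at 2) derivatives of the restriction to [2,oo).\<close>
definition ftilde :: "nat \<Rightarrow> real \<Rightarrow> real" where
  "ftilde n x =
     (real n + 1 - 2 * x - x * (x + real n - 2) + (1 / real n) * (x ^ 2 - x))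
     / (real n - 1 - x * (x + real n - 2))"

end

theory Submission
  imports Defs
begin

text \<open>Write \<open>ftilde n = N / D\<close> with quadratic \<open>N\<close> and \<open>D\<close>. By the quotient rule
  \<open>ftilde' = P / D\<^sup>2\<close> with \<open>P = N' D - N D'\<close>, so at a critical point \<open>P = 0\<close> and the
  second derivative reduces to \<open>P' / D\<^sup>2 = (N'' D - N D'') / D\<^sup>2\<close>. For the concrete
  quadratics this numerator collapses to \<open>2 (3 - 1/n) (1 - x)\<close>, which is negative for
  \<open>x > 1\<close>, while \<open>D\<close> does not vanish on \<open>[2,\<infinity>)\<close>.\<close>

lemma deriv2_quotient_at_critical_point:
  fixes N D N' D' :: "real \<Rightarrow> real"
  assumes "open S" and "x \<in> S"
    and D_nonzero: "\<And>y. y \<in> S \<Longrightarrow> D y \<noteq> 0"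
    and N_deriv: "\<And>y. y \<in> S \<Longrightarrow> (N has_real_derivative N' y) (at y)"
    and D_deriv: "\<And>y. y \<in> S \<Longrightarrow> (D has_real_derivative D' y) (at y)"
    and "(N' has_real_derivative N'') (at x)"
    and "(D' has_real_derivative D'') (at x)"
    and critical: "deriv (\<lambda>y. N y / D y) x = 0"
  shows "deriv (deriv (\<lambda>y. N y / D y)) x = (N'' * D x - N x * D'') / (D x)\<^sup>2"
proof -
  define P where "P y = N' y * D y - N y * D' y" for y
  have quotient_deriv: "deriv (\<lambda>y. N y / D y) y = P y / (D y)\<^sup>2" if "y \<in> S" for y
    using DERIV_divide[OF N_deriv D_deriv, OF that that] D_nonzero[OF that]
    by (intro DERIV_imp_deriv) (simp add: P_def power2_eq_square)
  have "P x = 0"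
    using critical quotient_deriv[OF \<open>x \<in> S\<close>] D_nonzero[OF \<open>x \<in> S\<close>] by simp
  have "(P has_real_derivative N'' * D x - N x * D'') (at x)"
    unfolding P_def[abs_def]
    using assms(6,7) N_deriv[OF \<open>x \<in> S\<close>] D_deriv[OF \<open>x \<in> S\<close>]
    by (auto intro!: derivative_eq_intros simp: algebra_simps)
  then have "((\<lambda>y. P y / (D y)\<^sup>2) has_real_derivative (N'' * D x - N x * D'') / (D x)\<^sup>2) (at x)"
    using D_deriv[OF \<open>x \<in> S\<close>] D_nonzero[OF \<open>x \<in> S\<close>] \<open>P x = 0\<close>
    by (auto intro!: derivative_eq_intros simp: power2_eq_square)
  then have "(deriv (\<lambda>y. N y / D y) has_real_derivative (N'' * D x - N x * D'') / (D x)\<^sup>2) (at x)"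
    by (rule has_field_derivative_transform_within_open[OF _ assms(1,2)])
      (simp add: quotient_deriv)
  then show ?thesis
    by (rule DERIV_imp_deriv)
qed

definition ftilde_num :: "nat \<Rightarrow> real \<Rightarrow> real" where
  "ftilde_num n x = real n + 1 - 2 * x - x * (x + real n - 2) + (1 / real n) * (x ^ 2 - x)"

definition ftilde_denom :: "nat \<Rightarrow> real \<Rightarrow> real" where
  "ftilde_denom n x = real n - 1 - x * (x + real n - 2)"

lemma ftilde_eq_quotient: "ftilde n = (\<lambda>x. ftilde_num n x / ftilde_denom n x)"
  by (simp add: fun_eq_iff ftilde_def ftilde_num_def ftilde_denom_def)

lemma ftilde_num_has_derivative:
  "(ftilde_num n has_real_derivative - real n - 2 * x + (1 / real n) * (2 * x - 1)) (at x)"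
  unfolding ftilde_num_def[abs_def]
  by (cases "n = 0") (auto intro!: derivative_eq_intros simp: algebra_simps)

lemma ftilde_denom_has_derivative:
  "(ftilde_denom n has_real_derivative - (2 * x + real n - 2)) (at x)"
  unfolding ftilde_denom_def[abs_def]
  by (auto intro!: derivative_eq_intros simp: algebra_simps)

lemma ftilde_denom_neg:
  assumes "x \<ge> 2"
  shows "ftilde_denom n x < 0"
proof -
  have "real n \<le> 2 * (x + real n - 2)" using assms by simp
  also have "\<dots> \<le> x * (x + real n - 2)" using assms by (intro mult_right_mono) auto
  finally show ?thesis by (simp add: ftilde_denom_def)
qed

lemma ftilde_second_order_numerator:
  assumes "n > 0"
  shows "2 * (1 / real n - 1) * ftilde_denom n x - ftilde_num n x * (-2)
    = 2 * (3 - 1 / real n) * (1 - x)"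
  using assms
  by (simp add: ftilde_num_def ftilde_denom_def field_simps power2_eq_square)

theorem lemma4p1:
  fixes n :: nat and xbar :: real
  assumes "n \<ge> 2"
    and "xbar \<ge> 2"
    and "deriv (ftilde n) xbar = 0"
  shows "deriv (deriv (ftilde n)) xbar < 0"
proof -
  let ?S = "{x. ftilde_denom n x < 0}"
  have open_S: "open ?S"
    unfolding ftilde_denom_def by (intro open_Collect_less continuous_intros)
  have xbar_in_S: "xbar \<in> ?S" using ftilde_denom_neg[OF assms(2)] by simp
  have num_deriv2: "((\<lambda>x. - real n - 2 * x + (1 / real n) * (2 * x - 1))
      has_real_derivative 2 * (1 / real n - 1)) (at xbar)"
    using assms(1) by (auto intro!: derivative_eq_intros simp: algebra_simps)
  have denom_deriv2: "((\<lambda>x. - (2 * x + real n - 2)) has_real_derivative -2) (at xbar)"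
    by (auto intro!: derivative_eq_intros)
  have "deriv (deriv (ftilde n)) xbar
      = (2 * (1 / real n - 1) * ftilde_denom n xbar - ftilde_num n xbar * (-2))
        / (ftilde_denom n xbar)\<^sup>2"
    unfolding ftilde_eq_quotient
    using assms(3)
    by (intro deriv2_quotient_at_critical_point[OF open_S xbar_in_S _
          ftilde_num_has_derivative ftilde_denom_has_derivative num_deriv2 denom_deriv2])
      (auto simp: ftilde_eq_quotient)
  also have "\<dots> = 2 * (3 - 1 / real n) * (1 - xbar) / (ftilde_denom n xbar)\<^sup>2"
    using assms(1) by (subst ftilde_second_order_numerator) simp_all
  finally have "deriv (deriv (ftilde n)) xbar
      = 2 * (3 - 1 / real n) * (1 - xbar) / (ftilde_denom n xbar)\<^sup>2" .
  moreover have "3 - 1 / real n > 0" using assms(1) by (simp add: field_simps)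
  moreover have "(ftilde_denom n xbar)\<^sup>2 > 0" using xbar_in_S by simp
  ultimately show ?thesis
    using assms(2) by (simp add: mult_pos_neg divide_neg_pos)
qed

end
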